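(* Let $A=\{a_1,a_2,\ldots,a_k\}$ be a set of $k\ge1$ distinct positive integers, let $\alpha$ be a positive integer with $\alpha\le k$, let $\tau$ be a permutation of $\{1,2,\ldots,k\}$, and let $A_{\tau(j)}=\{a_{\tau(1)},\ldots,a_{\tau(j)}\}$ for $j=1,\ldots,k$, with $A_{\tau(0)}=\emptyset$. Then \[ (a)\quad f(A)= \sum_{j=1}^k \sum_{ d\mid a_{\tau(j)} } \mu(d)\, 2^{v(A_{\tau(j-1)},d)}, \] \[ (b) \quad f_{\alpha}(A) = \sum_{j=1}^k \sum_{ d\mid a_{\tau(j)} } \mu(d) \binom{v(A_{\tau(j-1)},d)}{\alpha -1}. \]
   Context: $\mu$ is the Möbius function. For a finite set $B$ of positive integers and a positive integer $d$, $v(B,d)$ is the number of multiples of $d$ in $B$ (so $v(\emptyset,d)=0$). $f(A)$ is the number of nonempty subsets $X\subseteq A$ with $\gcd(X)=1$, and $f_\alpha(A)$ is the number of subsets $X\subseteq A$ with $|X|=\alpha$ and $\gcd(X)=1$. Binomial coefficients satisfy $\binom{m}{0}=1$ and $\binom{m}{k}=0$ when $k>m$. *)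

theory Defs
  imports "HOL-Computational_Algebra.Computational_Algebra" "HOL-Combinatorics.Permutations"
begin

definition mobius :: "nat \<Rightarrow> int" where
  "mobius d = (if squarefree d then (-1) ^ card (prime_factors d) else 0)"

definition v :: "nat set \<Rightarrow> nat \<Rightarrow> nat" where
  "v B d = card {b \<in> B. d dvd b}"

definition f :: "nat set \<Rightarrow> nat" where
  "f A = card {X. X \<subseteq> A \<and> X \<noteq> {} \<and> Gcd X = 1}"

definition f_alpha :: "nat \<Rightarrow> nat set \<Rightarrow> nat" where
  "f_alpha \<alpha> A = card {X. X \<subseteq> A \<and> card X = \<alpha> \<and> Gcd X = 1}"

end

theory Submission
  imports Defs
begin

text \<open>Insert the elements \<open>a (\<tau> 1), \<dots>, a (\<tau> k)\<close> one at a time. The subsets with gcd 1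
  gained at step \<open>j\<close> are \<open>insert x Y\<close> with \<open>x = a (\<tau> j)\<close>, \<open>Y \<subseteq> B = a ` \<tau> ` {1..j-1}\<close> and
  \<open>coprime x (Gcd Y)\<close>. Writing the indicator of this condition as \<open>\<Sum>d | d dvd gcd x (Gcd Y). \<mu> d\<close>
  and swapping the sums, the gain is \<open>\<Sum>d | d dvd x. \<mu> d\<close> times the number of admissible \<open>Y\<close>
  consisting of multiples of \<open>d\<close>, namely \<open>2 ^ v B d\<close>, resp. \<open>v B d choose (\<alpha> - 1)\<close> when
  \<open>card Y = \<alpha> - 1\<close> is imposed.\<close>

lemma prime_factorization_Prod_primes:
  fixes P :: "nat set"
  assumes "finite P" "\<forall>p\<in>P. prime p"
  shows "prime_factorization (\<Prod>P) = mset_set P"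
  using prime_factorization_prod_mset_primes[of "mset_set P"] assms
  by (simp add: prod_unfold_prod_mset)

lemma prime_factors_Prod_primes:
  fixes P :: "nat set"
  assumes "finite P" "\<forall>p\<in>P. prime p"
  shows "prime_factors (\<Prod>P) = P"
  using prime_factorization_Prod_primes[OF assms] assms by simp

lemma squarefree_Prod_primes:
  fixes P :: "nat set"
  assumes "\<forall>p\<in>P. prime p"
  shows "squarefree (\<Prod>P)"
  using assms by (intro squarefree_prod_coprime) (auto intro: primes_coprime squarefree_prime)

lemma mobius_Prod_primes:
  fixes P :: "nat set"
  assumes "finite P" "\<forall>p\<in>P. prime p"
  shows "mobius (\<Prod>P) = (-1) ^ card P"
  using squarefree_Prod_primes[OF assms(2)] prime_factors_Prod_primes[OF assms]
  by (simp add: mobius_def)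

lemma Prod_prime_factors_squarefree:
  fixes d :: nat
  assumes "squarefree d"
  shows "\<Prod>(prime_factors d) = d"
proof -
  have "d \<noteq> 0" using assms by (rule contrapos_pn) simp
  then have "\<forall>p\<in>prime_factors d. multiplicity p d = 1"
    using assms squarefree_factorial_semiring' by blast
  then have "(\<Prod>p\<in>prime_factors d. p ^ multiplicity p d) = \<Prod>(prime_factors d)"
    by (intro prod.cong) auto
  with prod_prime_factors[of d] \<open>d \<noteq> 0\<close> show ?thesis by simp
qed

lemma bij_betw_Prod_squarefree_divisors:
  fixes n :: nat
  assumes "n > 0"
  shows "bij_betw Prod (Pow (prime_factors n)) {d. d dvd n \<and> squarefree d}"
proof (rule bij_betw_byWitness[where f' = prime_factors])
  show "\<forall>P\<in>Pow (prime_factors n). prime_factors (\<Prod>P) = P"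
    by (auto intro!: prime_factors_Prod_primes intro: finite_subset)
  show "\<forall>d\<in>{d. d dvd n \<and> squarefree d}. \<Prod>(prime_factors d) = d"
    by (auto intro: Prod_prime_factors_squarefree)
  show "prime_factors ` {d. d dvd n \<and> squarefree d} \<subseteq> Pow (prime_factors n)"
    using assms by (auto dest: dvd_prime_factors[rotated])
  show "Prod ` Pow (prime_factors n) \<subseteq> {d. d dvd n \<and> squarefree d}"
  proof safe
    fix P assume P: "P \<subseteq> prime_factors n"
    then have "finite P" "\<forall>p\<in>P. prime p" by (auto intro: finite_subset)
    then show "squarefree (\<Prod>P)" by (intro squarefree_Prod_primes)
    have "mset_set P \<subseteq># mset_set (prime_factors n)"
      using P by (intro subset_imp_msubset_mset_set) simp_all
    also have "\<dots> \<subseteq># prime_factorization n" by (rule mset_set_set_mset_msubset)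
    finally have "prime_factorization (\<Prod>P) \<subseteq># prime_factorization n"
      by (simp add: prime_factorization_Prod_primes[OF \<open>finite P\<close> \<open>\<forall>p\<in>P. prime p\<close>])
    then show "\<Prod>P dvd n"
      using \<open>\<forall>p\<in>P. prime p\<close> assms
      by (subst (asm) prime_factorization_subset_iff_dvd) (auto simp: prime_gt_0_nat intro!: prod_pos)
  qed
qed

lemma sum_mobius_divisors:
  fixes n :: nat
  assumes "n > 0"
  shows "(\<Sum>d | d dvd n. mobius d) = (if n = 1 then 1 else 0)"
proof -
  let ?S = "prime_factors n"
  have "(\<Sum>d | d dvd n. mobius d) = (\<Sum>d | d dvd n \<and> squarefree d. mobius d)"
    using assms by (intro sum.mono_neutral_right) (auto simp: mobius_def)
  also have "\<dots> = (\<Sum>P\<in>Pow ?S. mobius (\<Prod>P))"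
    using sum.reindex_bij_betw[OF bij_betw_Prod_squarefree_divisors[OF assms], of mobius] by simp
  also have "\<dots> = (\<Sum>P\<in>Pow ?S. (-1) ^ card P)"
    by (intro sum.cong refl mobius_Prod_primes) (auto intro: finite_subset)
  also have "\<dots> = (\<Prod>p\<in>?S. 1 - 1)"
    using prod_diff_conv_sum[of ?S "\<lambda>_. 1::int" "\<lambda>_. 1"] by simp
  also have "\<dots> = (if n = 1 then 1 else 0)"
    using assms prime_factorization_empty_iff[of n] by (auto simp: card_gt_0_iff)
  finally show ?thesis .
qed

lemma card_coprime_mobius_sieve:
  fixes g :: "'a \<Rightarrow> nat"
  assumes "finite T" "x > 0"
  shows "int (card {t\<in>T. coprime x (g t)}) =
    (\<Sum>d | d dvd x. mobius d * int (card {t\<in>T. d dvd g t}))"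
proof -
  have count: "int (card {t\<in>T. P t}) = (\<Sum>t\<in>T. if P t then 1 else 0)" for P
    using sum.inter_filter[OF \<open>finite T\<close>, of "\<lambda>_. 1::int" P] by simp
  have mobius_gcd: "(\<Sum>d | d dvd x \<and> d dvd g t. mobius d) = (if coprime x (g t) then 1 else 0)"
    for t using sum_mobius_divisors[of "gcd x (g t)"] assms(2) by (simp add: coprime_iff_gcd_eq_1)
  have "int (card {t\<in>T. coprime x (g t)}) = (\<Sum>t\<in>T. \<Sum>d | d dvd x \<and> d dvd g t. mobius d)"
    unfolding count mobius_gcd ..
  also have "\<dots> = (\<Sum>t\<in>T. \<Sum>d | d dvd x. if d dvd g t then mobius d else 0)"
    using sum.inter_filter[of "{d. d dvd x}" mobius] assms(2) by simp
  also have "\<dots> = (\<Sum>d | d dvd x. \<Sum>t\<in>T. if d dvd g t then mobius d else 0)"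
    by (rule sum.swap)
  also have "\<dots> = (\<Sum>d | d dvd x. mobius d * int (card {t\<in>T. d dvd g t}))"
    unfolding count by (simp add: sum_distrib_left if_distrib cong: if_cong)
  finally show ?thesis .
qed

lemma card_subsets_coprime_insert:
  assumes "finite B" "x > 0"
  shows "int (card {Y. Y \<subseteq> B \<and> Gcd (insert x Y) = 1}) =
    (\<Sum>d | d dvd x. mobius d * 2 ^ v B d)"
proof -
  have "{Y. Y \<subseteq> B \<and> Gcd (insert x Y) = 1} = {Y\<in>Pow B. coprime x (Gcd Y)}"
    by (auto simp: coprime_iff_gcd_eq_1)
  moreover have "{Y\<in>Pow B. d dvd Gcd Y} = Pow {b\<in>B. d dvd b}" for d
    by (auto simp: dvd_Gcd_iff)
  ultimately show ?thesis
    using card_coprime_mobius_sieve[of "Pow B" x Gcd] assms by (simp add: card_Pow v_def)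
qed

lemma card_subsets_card_coprime_insert:
  assumes "finite B" "x > 0"
  shows "int (card {Y. Y \<subseteq> B \<and> card Y = m \<and> Gcd (insert x Y) = 1}) =
    (\<Sum>d | d dvd x. mobius d * int (v B d choose m))"
proof -
  let ?T = "{Y. Y \<subseteq> B \<and> card Y = m}"
  have "finite ?T" using assms(1) by simp
  have "{Y. Y \<subseteq> B \<and> card Y = m \<and> Gcd (insert x Y) = 1} = {Y\<in>?T. coprime x (Gcd Y)}"
    by (auto simp: coprime_iff_gcd_eq_1)
  moreover have "{Y\<in>?T. d dvd Gcd Y} = {Y. Y \<subseteq> {b\<in>B. d dvd b} \<and> card Y = m}" for d
    by (auto simp: dvd_Gcd_iff)
  ultimately show ?thesis
    using card_coprime_mobius_sieve[OF \<open>finite ?T\<close> assms(2), of Gcd] assms(1)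
    by (simp add: n_subsets v_def)
qed

lemma card_subsets_insert:
  assumes "finite B" "x \<notin> B"
  shows "card {X. X \<subseteq> insert x B \<and> R X} =
    card {X. X \<subseteq> B \<and> R X} + card {Y. Y \<subseteq> B \<and> R (insert x Y)}"
proof -
  have split: "{X. X \<subseteq> insert x B \<and> R X} =
      {X. X \<subseteq> B \<and> R X} \<union> insert x ` {Y. Y \<subseteq> B \<and> R (insert x Y)}"
    by (auto simp: subset_insert_iff insert_absorb intro!: image_eqI[where x = "_ - {x}"])
  have "inj_on (insert x) {Y. Y \<subseteq> B \<and> R (insert x Y)}"
    using assms by (intro inj_onI) (metis Diff_insert_absorb subsetD mem_Collect_eq)
  moreover have "{X. X \<subseteq> B \<and> R X} \<inter> insert x ` {Y. Y \<subseteq> B \<and> R (insert x Y)} = {}"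
    using assms by auto
  moreover have "finite {X. X \<subseteq> B \<and> P X}" for P
    using assms(1) by (rule rev_finite_subset[OF finite_Collect_subsets]) auto
  ultimately show ?thesis
    unfolding split by (subst card_Un_disjoint) (auto simp: card_image)
qed

lemma f_insert:
  assumes "finite B" "x \<notin> B" "x > 0"
  shows "int (f (insert x B)) = int (f B) + (\<Sum>d | d dvd x. mobius d * 2 ^ v B d)"
  using card_subsets_insert[OF assms(1,2), of "\<lambda>X. X \<noteq> {} \<and> Gcd X = 1"]
    card_subsets_coprime_insert[OF assms(1,3)]
  unfolding f_def by (simp add: conj_assoc)

lemma f_alpha_Suc_insert:
  assumes "finite B" "x \<notin> B" "x > 0"
  shows "int (f_alpha (Suc m) (insert x B)) =
    int (f_alpha (Suc m) B) + (\<Sum>d | d dvd x. mobius d * int (v B d choose m))"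
proof -
  have "card (insert x Y) = Suc m \<longleftrightarrow> card Y = m" if "Y \<subseteq> B" for Y
    using that assms(1,2) finite_subset by (subst card_insert_disjoint) auto
  then have "{Y. Y \<subseteq> B \<and> card (insert x Y) = Suc m \<and> Gcd (insert x Y) = 1} =
      {Y. Y \<subseteq> B \<and> card Y = m \<and> Gcd (insert x Y) = 1}"
    by blast
  then show ?thesis
    using card_subsets_insert[OF assms(1,2), of "\<lambda>X. card X = Suc m \<and> Gcd X = 1"]
      card_subsets_card_coprime_insert[OF assms(1,3)]
    unfolding f_alpha_def by simp
qed

lemma sum_increments_image:
  fixes F :: "'a set \<Rightarrow> 'b::comm_monoid_add" and b :: "nat \<Rightarrow> 'a"
  assumes "F {} = 0"
    and step: "\<And>B x. finite B \<Longrightarrow> x \<notin> B \<Longrightarrow> P x \<Longrightarrow> F (insert x B) = F B + G B x"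
    and "inj_on b {1..m}" "\<forall>i\<in>{1..m}. P (b i)"
  shows "F (b ` {1..m}) = (\<Sum>j=1..m. G (b ` {1..j-1}) (b j))"
  using assms(3,4)
proof (induction m)
  case 0
  then show ?case using assms(1) by simp
next
  case (Suc m)
  have "inj_on b {1..m}" using Suc.prems(1) by (rule inj_on_subset) auto
  with Suc have IH: "F (b ` {1..m}) = (\<Sum>j=1..m. G (b ` {1..j-1}) (b j))" by simp
  have "b (Suc m) \<notin> b ` {1..m}"
    using inj_onD[OF Suc.prems(1)] by fastforce
  moreover have "b ` {1..Suc m} = insert (b (Suc m)) (b ` {1..m})"
    by (auto simp: atLeastAtMostSuc_conv)
  ultimately have "F (b ` {1..Suc m}) = F (b ` {1..m}) + G (b ` {1..m}) (b (Suc m))"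
    using step Suc.prems(2) by simp
  with IH show ?case by (simp add: sum.cl_ivl_Suc)
qed

theorem theorem3p2:
  fixes a :: "nat \<Rightarrow> nat" and k \<alpha> :: nat and \<tau> :: "nat \<Rightarrow> nat"
  assumes "k \<ge> 1"
    and "inj_on a {1..k}"
    and "\<forall>i\<in>{1..k}. a i > 0"
    and "1 \<le> \<alpha>" and "\<alpha> \<le> k"
    and "\<tau> permutes {1..k}"
  shows "(int (f (a ` {1..k})) =
           (\<Sum>j=1..k. \<Sum>d | d dvd a (\<tau> j).
              mobius d * 2 ^ v (a ` \<tau> ` {1..j-1}) d)) \<and>
         (int (f_alpha \<alpha> (a ` {1..k})) =
           (\<Sum>j=1..k. \<Sum>d | d dvd a (\<tau> j).
              mobius d * int ((v (a ` \<tau> ` {1..j-1}) d) choose (\<alpha> - 1))))"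
proof -
  define b where "b = a \<circ> \<tau>"
  have b_image: "b ` S = a ` \<tau> ` S" for S by (simp add: b_def image_comp)
  have \<tau>_image: "\<tau> ` {1..k} = {1..k}" using assms(6) by (rule permutes_image)
  have b_inj: "inj_on b {1..k}"
    unfolding b_def using \<tau>_image assms(2) permutes_inj_on[OF assms(6)] by (simp add: comp_inj_on)
  have b_pos: "\<forall>i\<in>{1..k}. b i > 0" using assms(3) \<tau>_image by (auto simp: b_def)
  have "int (f (b ` {1..k})) =
      (\<Sum>j=1..k. \<Sum>d | d dvd b j. mobius d * 2 ^ v (b ` {1..j-1}) d)"
    by (rule sum_increments_image[OF _ f_insert b_inj b_pos]) (simp add: f_def)
  moreover have "int (f_alpha (Suc m) (b ` {1..k})) =
      (\<Sum>j=1..k. \<Sum>d | d dvd b j. mobius d * int (v (b ` {1..j-1}) d choose m))" for m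
    by (rule sum_increments_image[OF _ f_alpha_Suc_insert b_inj b_pos]) (simp add: f_alpha_def)
  moreover obtain m where "\<alpha> = Suc m" using assms(4) by (cases \<alpha>) auto
  ultimately show ?thesis
    unfolding b_image \<tau>_image by (simp add: b_def)
qed

end
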